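(* Assume $\chi$ is weakly generic, let $\sigma=\sigma_{a,b}$ be a Serre weight with $\mathcal{S}(\chi_1,\chi_2,\sigma)\neq\varnothing$, let $(J,x)$ be its maximal element, and let $s,t,r,\xi$ be as in the context. Suppose $\kappa\in\Sigma$ satisfies $t_\kappa<r_\kappa$. Then $v_p(\xi_\kappa-t_\kappa(p^f-1))>1$ if and only if $e=1$ and $r_\tau=p$, $n_\tau=1$ and $t_\tau=0$ for all $\tau\in\Sigma$.
   Context: Let $p$ be a prime, $K/\mathbf{Q}_p$ finite with residue field $k$, residue degree $f$, ramification index $e$; $I_K$ inertia; $v_p$ is the $p$-adic valuation on $\mathbf{Q}$. Fix $\varpi\in\overline{K}$ with $\varpi^{p^f-1}$ a uniformiser; $\omega\colon G_K\to k^\times$ sends $g$ to the reduction of $g(\varpi)/\varpi$. $\Sigma=\mathrm{Hom}_{\mathbf{F}_p}(k,\overline{\mathbf{F}}_p)$, $\varphi(x)=x^p$, $\omega_\tau=\tau\circ\omega$, $\Omega_{\tau,a}=\sum_{i=0}^{f-1}p^ia_{\tau\circ\varphi^i}$. $\chi_1,\chi_2\colon G_K\to\overline{\mathbf{F}}_p^\times$ continuous, $\chi=\chi_1\chi_2^{-1}=\psi\prod_\tau\omega_\tau^{n_\tau}$, $\psi$ unramified, $n_\tau\in[1,p]$, some $n_\tau<p$. Weakly generic: $n_\tau\in[e,p-e]$ for all $\tau$. Serre weight $\sigma_{a,b}=\bigotimes_\tau(\det^{b_\tau}\otimes\mathrm{Sym}^{a_\tau-b_\tau}k^2)\otimes_{k,\tau}\overline{\mathbf{F}}_p$,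 $a_\tau-b_\tau\in[0,p-1]$; $r_\tau=a_\tau-b_\tau+1$. $\mathcal{S}(\chi_1,\chi_2,\sigma)$: pairs $(J,x)$, $J\subseteq\Sigma$, $x_\tau\in[0,e-1]$, with $\chi_1|_{I_K}=\prod_{\tau\in J}\omega_\tau^{a_\tau+1+x_\tau}\prod_{\tau\notin J}\omega_\tau^{b_\tau+x_\tau}$ and $\chi_2|_{I_K}=\prod_{\tau\notin J}\omega_\tau^{a_\tau+e-x_\tau}\prod_{\tau\in J}\omega_\tau^{b_\tau+e-1-x_\tau}$. $s(J,x)_\tau=r_\tau+x_\tau$ if $\tau\in J$, $x_\tau$ if $\tau\notin J$. Order: $(J,x)\preceq(J',x')$ iff $\Omega_{\tau,s(J',x')-s(J,x)}\in(p^f-1)\mathbf{Z}_{\ge0}$ for all $\tau$; a non-empty $\mathcal{S}$ has a unique maximal element. For the maximal $(J,x)$: $s=s(J,x)$, $t_\tau=a_\tau-b_\tau+e-s_\tau$, $\xi_\tau=(p^f-1)s_\tau+\Omega_{\tau,s-t}$. *)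

theory Defs
  imports "HOL-Number_Theory.Number_Theory" "HOL-Library.Extended_Nat"
begin

text \<open>Concrete model. \<Sigma> = Hom(k, Fpbar) is indexed by i < f via tau_i = tau_0 o phi^i,
  so tau_i o phi^j = tau_((i+j) mod f). Functions on \<Sigma> are functions nat => _ read on {..<f}.
  Since omega_(tau_i) = omega_(tau_0)^(p^i) and omega_(tau_0) restricted to inertia has exact
  order p^f - 1, a character of inertia of the form prod_tau omega_tau^(c_tau) is omega_(tau_0)
  to the power Omega_(tau_0, c), and equality of such characters is congruence of exponents
  modulo p^f - 1. A character chi_j of G_K restricted to I_K is recorded by its exponent
  cj (chi_j|I_K = omega_(tau_0)^cj).\<close>

definition Omega :: "nat \<Rightarrow> nat \<Rightarrow> nat \<Rightarrow> (nat \<Rightarrow> int) \<Rightarrow> int" where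
  "Omega p f i a = (\<Sum>j<f. int p ^ j * a ((i + j) mod f))"

definition rr :: "(nat \<Rightarrow> int) \<Rightarrow> (nat \<Rightarrow> int) \<Rightarrow> nat \<Rightarrow> int" where
  "rr a b i = a i - b i + 1"

definition Sset :: "nat \<Rightarrow> nat \<Rightarrow> nat \<Rightarrow> (nat \<Rightarrow> int) \<Rightarrow> (nat \<Rightarrow> int) \<Rightarrow> int \<Rightarrow> int
    \<Rightarrow> (nat set \<times> (nat \<Rightarrow> nat)) set" where
  "Sset p f e a b c1 c2 = {(J, x). J \<subseteq> {..<f} \<and> (\<forall>i<f. x i \<le> e - 1) \<and> (\<forall>i\<ge>f. x i = 0) \<and>
     [c1 = Omega p f 0 (\<lambda>i. if i \<in> J then a i + 1 + int (x i) else b i + int (x i))]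
        (mod (int p ^ f - 1)) \<and>
     [c2 = Omega p f 0 (\<lambda>i. if i \<notin> J then a i + int e - int (x i) else b i + int e - 1 - int (x i))]
        (mod (int p ^ f - 1))}"

definition sv :: "(nat \<Rightarrow> int) \<Rightarrow> (nat \<Rightarrow> int) \<Rightarrow> nat set \<times> (nat \<Rightarrow> nat) \<Rightarrow> nat \<Rightarrow> int" where
  "sv a b Jx i = (if i \<in> fst Jx then rr a b i + int (snd Jx i) else int (snd Jx i))"

definition prec :: "nat \<Rightarrow> nat \<Rightarrow> (nat \<Rightarrow> int) \<Rightarrow> (nat \<Rightarrow> int) \<Rightarrow>
    nat set \<times> (nat \<Rightarrow> nat) \<Rightarrow> nat set \<times> (nat \<Rightarrow> nat) \<Rightarrow> bool" where
  "prec p f a b Jx Jx' \<longleftrightarrow>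
     (\<forall>i<f. \<exists>m::nat. Omega p f i (\<lambda>j. sv a b Jx' j - sv a b Jx j) = (int p ^ f - 1) * int m)"

definition tv :: "nat \<Rightarrow> (nat \<Rightarrow> int) \<Rightarrow> (nat \<Rightarrow> int) \<Rightarrow> nat set \<times> (nat \<Rightarrow> nat) \<Rightarrow> nat \<Rightarrow> int" where
  "tv e a b Jx i = a i - b i + int e - sv a b Jx i"

definition xiv :: "nat \<Rightarrow> nat \<Rightarrow> nat \<Rightarrow> (nat \<Rightarrow> int) \<Rightarrow> (nat \<Rightarrow> int) \<Rightarrow> nat set \<times> (nat \<Rightarrow> nat)
    \<Rightarrow> nat \<Rightarrow> int" where
  "xiv p f e a b Jx i = (int p ^ f - 1) * sv a b Jx i + Omega p f i (\<lambda>j. sv a b Jx j - tv e a b Jx j)"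

definition vp :: "nat \<Rightarrow> int \<Rightarrow> enat" where
  "vp p z = (if z = 0 then \<infinity> else enat (multiplicity (int p) z))"

end

theory Submission
  imports Defs
begin

text \<open>
  Write N = p^f - 1 and d = s - t. Since xi_kappa - t_kappa N = p Omega_(kappa+1)(d) and
  Omega_(kappa+1)(d) is congruent to d_(kappa+1) modulo p, the valuation exceeds 1 exactly when
  p divides d_(kappa+1). The congruences defining S together with chi give N | Omega_0(d - n),
  and as p is a unit modulo N, every Omega_i(d - n) is a multiple N c_i, where the carries c
  satisfy d_i - n_i = p c_(i+1) - c_i. The bounds on s, r and n give -2 <= c_i <= 1, with
  c_i = 1 only if d - n is constantly p - 1. Maximality of (J, x) forces c_(kappa+1) >= 0:
  otherwise, walking backwards from kappa, the carries stay at -2 until the first tau with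
  r_tau = p, and pushing one unit of s through this block gives a larger element of S.
  Then p | d_(kappa+1) = p c_(kappa+2) - c_(kappa+1) + n_(kappa+1) forces c_(kappa+1) = 1 and
  n_(kappa+1) = 1, hence e = 1 and d - n = p - 1 everywhere, which pins down r = p, n = 1
  and t = 0.
\<close>

lemma Omega_mod_index: "Omega p f (i mod f) g = Omega p f i g"
  unfolding Omega_def by (simp add: mod_add_left_eq)

lemma Omega_cong: "(\<And>k. k < f \<Longrightarrow> g k = h k) \<Longrightarrow> Omega p f i g = Omega p f i h"
  unfolding Omega_def by (intro sum.cong) (auto intro: mod_less_divisor)

lemma Omega_add: "Omega p f i (\<lambda>k. g k + h k) = Omega p f i g + Omega p f i h"
  unfolding Omega_def by (simp add: algebra_simps sum.distrib)

lemma Omega_diff: "Omega p f i (\<lambda>k. g k - h k) = Omega p f i g - Omega p f i h"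
  unfolding Omega_def by (simp add: algebra_simps sum_subtractf)

lemma Omega_scale: "Omega p f i (\<lambda>k. c * g k) = c * Omega p f i g"
  unfolding Omega_def by (simp add: sum_distrib_left algebra_simps)

lemma Omega_const_p_minus_1: "Omega p f i (\<lambda>_. int p - 1) = int p ^ f - 1"
  unfolding Omega_def by (simp add: power_diff_1_eq sum_distrib_left mult_ac)

lemma Omega_Suc_index:
  assumes "0 < f"
  shows "Omega p f i g + (int p ^ f - 1) * g (i mod f) = int p * Omega p f (Suc i) g"
proof -
  obtain f' where f: "f = Suc f'" using assms by (cases f) auto
  have split: "Omega p f i g = g (i mod f) + (\<Sum>j<f'. int p ^ Suc j * g ((i + Suc j) mod f))"
    unfolding Omega_def f by (subst sum.lessThan_Suc_shift) simp
  have "int p * Omega p f (Suc i) g = (\<Sum>j<f. int p ^ Suc j * g ((i + Suc j) mod f))"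
    unfolding Omega_def by (simp add: sum_distrib_left algebra_simps)
  also have "\<dots> = (\<Sum>j<f'. int p ^ Suc j * g ((i + Suc j) mod f)) + int p ^ f * g ((i + f) mod f)"
    unfolding f by (rule sum.lessThan_Suc)
  finally show ?thesis using split by (simp add: algebra_simps)
qed

lemma Omega_cong_mod_p:
  assumes "0 < f"
  shows "[Omega p f i g = g (i mod f)] (mod int p)"
proof -
  obtain f' where f: "f = Suc f'" using assms by (cases f) auto
  have "Omega p f i g = g (i mod f) + int p * (\<Sum>j<f'. int p ^ j * g ((i + Suc j) mod f))"
    unfolding Omega_def f
    by (subst sum.lessThan_Suc_shift) (simp add: sum_distrib_left mult.assoc)
  then show ?thesis by (simp add: cong_iff_dvd_diff)
qed

lemma Omega_telescope:
  assumes "\<And>k. C (k mod f) = C k"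
  shows "Omega p f i (\<lambda>k. int p * C (Suc k) - C k) = (int p ^ f - 1) * C i"
proof -
  have "Omega p f i (\<lambda>k. int p * C (Suc k) - C k)
      = (\<Sum>j<f. int p ^ Suc j * C (i + Suc j) - int p ^ j * C (i + j))"
    unfolding Omega_def
  proof (intro sum.cong refl)
    fix j
    have "C (Suc ((i + j) mod f)) = C (i + Suc j)"
      by (metis assms add_Suc_right mod_Suc_eq)
    then show "int p ^ j * (int p * C (Suc ((i + j) mod f)) - C ((i + j) mod f))
       = int p ^ Suc j * C (i + Suc j) - int p ^ j * C (i + j)"
      by (simp add: assms algebra_simps)
  qed
  also have "\<dots> = int p ^ f * C (i + f) - C i"
    using sum_lessThan_telescope[of "\<lambda>j. int p ^ j * C (i + j)" f] by simp
  also have "C (i + f) = C i" by (metis assms mod_add_self2)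
  finally show ?thesis by (simp add: algebra_simps)
qed

text \<open>\<open>cyc_diff f \<kappa> l\<close> is the index l steps before \<kappa> on the cycle \<open>{..<f}\<close>; read the
  other way round, \<open>cyc_diff f \<kappa> k\<close> is the number of steps from k forward to \<kappa>.\<close>

definition cyc_diff :: "nat \<Rightarrow> nat \<Rightarrow> nat \<Rightarrow> nat" where
  "cyc_diff f u v = nat ((int u - int v) mod int f)"

lemma int_cyc_diff: "0 < f \<Longrightarrow> int (cyc_diff f u v) = (int u - int v) mod int f"
  unfolding cyc_diff_def by simp

lemma cyc_diff_less: "0 < f \<Longrightarrow> cyc_diff f u v < f"
  unfolding cyc_diff_def by (simp add: nat_less_iff)

lemma cyc_diff_mod_right: "cyc_diff f u (v mod f) = cyc_diff f u v"
  unfolding cyc_diff_def by (metis mod_diff_right_eq of_nat_mod)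

lemma cyc_diff_cyc_diff: "0 < f \<Longrightarrow> cyc_diff f u (cyc_diff f u v) = v mod f"
proof -
  assume f: "0 < f"
  have "int (cyc_diff f u (cyc_diff f u v)) = (int u - (int u - int v) mod int f) mod int f"
    using f by (simp add: int_cyc_diff)
  also have "\<dots> = (int u - (int u - int v)) mod int f"
    by (rule mod_diff_right_eq)
  also have "\<dots> = int (v mod f)"
    by (simp add: of_nat_mod)
  finally show ?thesis by simp
qed

lemma cyc_diff_eq_0_iff: "0 < f \<Longrightarrow> cyc_diff f u v = 0 \<longleftrightarrow> v mod f = u mod f"
proof -
  assume f: "0 < f"
  have "cyc_diff f u v = 0 \<longleftrightarrow> (int u - int v) mod int f = 0"
    using int_cyc_diff[OF f, of u v] by linarith
  also have "\<dots> \<longleftrightarrow> int v mod int f = int u mod int f"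
    by (metis dvd_eq_mod_eq_0 mod_eq_dvd_iff)
  finally show ?thesis by (simp flip: of_nat_mod)
qed

lemma add_cyc_diff_mod: "0 < f \<Longrightarrow> (v + cyc_diff f u v) mod f = u mod f"
proof -
  assume f: "0 < f"
  have "int ((v + cyc_diff f u v) mod f) = (int v + (int u - int v) mod int f) mod int f"
    using f by (simp add: int_cyc_diff of_nat_mod)
  also have "\<dots> = (int v + (int u - int v)) mod int f"
    by (rule mod_add_right_eq)
  also have "\<dots> = int (u mod f)"
    by (simp add: of_nat_mod)
  finally show ?thesis by simp
qed

lemma cyc_diff_Suc:
  assumes f: "0 < f"
  shows "cyc_diff f u (Suc v) = (if cyc_diff f u v = 0 then f - 1 else cyc_diff f u v - 1)"
proof -
  have "int (cyc_diff f u (Suc v)) = (int (cyc_diff f u v) - 1) mod int f"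
    using f by (simp add: int_cyc_diff mod_diff_left_eq algebra_simps)
  also have "\<dots> = int (if cyc_diff f u v = 0 then f - 1 else cyc_diff f u v - 1)"
  proof (cases "cyc_diff f u v = 0")
    case True
    then show ?thesis using f by (simp add: zmod_minus1 of_nat_diff)
  next
    case False
    then show ?thesis using cyc_diff_less[OF f, of u v] by (simp add: of_nat_diff)
  qed
  finally show ?thesis by (simp only: of_nat_eq_iff)
qed

lemma Suc_cyc_diff_Suc_mod: "0 < f \<Longrightarrow> Suc (cyc_diff f u (Suc v)) mod f = cyc_diff f u v"
  by (simp add: cyc_diff_Suc cyc_diff_less)

lemma Omega_term_le:
  assumes "0 < p" "\<And>j. j < f \<Longrightarrow> 0 \<le> w j" "k < f"
  shows "w k \<le> Omega p f i w"
proof -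
  have f: "0 < f" using assms(3) by simp
  define j where "j = cyc_diff f k i"
  have j: "j < f" "(i + j) mod f = k"
    using add_cyc_diff_mod[OF f, of i k] cyc_diff_less[OF f] assms(3) by (simp_all add: j_def)
  have "w k \<le> int p ^ j * w ((i + j) mod f)"
    using j assms mult_right_mono[of 1 "int p ^ j" "w k"] by simp
  also have "\<dots> \<le> Omega p f i w" unfolding Omega_def
    by (rule member_le_sum[where f="\<lambda>j. int p ^ j * w ((i + j) mod f)"]) (use j assms in auto)
  finally show ?thesis .
qed

lemma dvd_Omega_index:
  assumes "0 < f" "int p ^ f - 1 dvd Omega p f 0 g"
  shows "int p ^ f - 1 dvd Omega p f i g"
proof (induction i)
  case 0
  show ?case using assms(2) .
next
  case (Suc i)
  have "coprime (int p ^ f) (int p ^ f - 1)"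
    by (rule coprime_doff_one_right)
  then have "coprime (int p ^ f - 1) (int p)"
    using assms(1) by (metis coprime_commute coprime_power_left_iff not_gr0)
  moreover have "int p ^ f - 1 dvd int p * Omega p f (Suc i) g"
    using Omega_Suc_index[OF assms(1), of p i g] Suc.IH by (metis dvd_add dvd_triv_left)
  ultimately show ?case by (simp add: coprime_dvd_mult_right_iff)
qed

lemma vp_mult_gt_1_iff:
  assumes "prime p"
  shows "1 < vp p (int p * z) \<longleftrightarrow> int p dvd z"
proof (cases "z = 0")
  case False
  have p: "int p \<noteq> 0" "\<not> is_unit (int p)" using assms by (auto simp: prime_gt_0_nat)
  then have nz: "int p * z \<noteq> 0" using False by simp
  have "1 < vp p (int p * z) \<longleftrightarrow> 2 \<le> multiplicity (int p) (int p * z)"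
    using nz by (auto simp: vp_def one_enat_def)
  also have "\<dots> \<longleftrightarrow> int p ^ 2 dvd int p * z"
    using power_dvd_iff_le_multiplicity[OF nz p(2)] by simp
  also have "\<dots> \<longleftrightarrow> int p dvd z" using p by (simp add: power2_eq_square)
  finally show ?thesis .
qed (simp add: vp_def)

lemma Sset_iff:
  "(J, x) \<in> Sset p f e a b c1 c2 \<longleftrightarrow>
     J \<subseteq> {..<f} \<and> (\<forall>i<f. x i \<le> e - 1) \<and> (\<forall>i\<ge>f. x i = 0) \<and>
     [c1 = Omega p f 0 (\<lambda>i. b i + sv a b (J, x) i)] (mod int p ^ f - 1) \<and>
     [c2 = Omega p f 0 (\<lambda>i. a i + int e - sv a b (J, x) i)] (mod int p ^ f - 1)"
proof -
  have "(\<lambda>i. if i \<in> J then a i + 1 + int (x i) else b i + int (x i)) = (\<lambda>i. b i + sv a b (J, x) i)"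
    "(\<lambda>i. if i \<notin> J then a i + int e - int (x i) else b i + int e - 1 - int (x i))
       = (\<lambda>i. a i + int e - sv a b (J, x) i)"
    by (auto simp: sv_def rr_def)
  then show ?thesis unfolding Sset_def by simp
qed

definition admissible :: "nat \<Rightarrow> int \<Rightarrow> int \<Rightarrow> bool" where
  "admissible e r y \<longleftrightarrow> (0 \<le> y \<and> y < int e) \<or> (r \<le> y \<and> y < r + int e)"

lemma sv_admissible:
  assumes "(J, x) \<in> Sset p f e a b c1 c2" "1 \<le> e" "i < f"
  shows "admissible e (rr a b i) (sv a b (J, x) i)"
  using assms by (auto simp: Sset_iff admissible_def sv_def)

lemma obtain_Sset_with_sv:
  assumes Jx: "(J, x) \<in> Sset p f e a b c1 c2"
    and Y: "\<And>k. k < f \<Longrightarrow> admissible e (rr a b k) (Y k)"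
    and dvd: "int p ^ f - 1 dvd Omega p f 0 (\<lambda>k. Y k - sv a b (J, x) k)"
  obtains J' x' where "(J', x') \<in> Sset p f e a b c1 c2" "\<And>k. k < f \<Longrightarrow> sv a b (J', x') k = Y k"
proof
  define J' where "J' = {k. k < f \<and> \<not> (0 \<le> Y k \<and> Y k < int e)}"
  define x' where "x' k = (if k < f then nat (if k \<in> J' then Y k - rr a b k else Y k) else 0)" for k
  show sv': "sv a b (J', x') k = Y k" if "k < f" for k
    using Y[OF that] that by (auto simp: sv_def J'_def x'_def admissible_def)
  let ?N = "int p ^ f - 1" and ?s = "sv a b (J, x)" and ?s' = "sv a b (J', x')"
  let ?D = "Omega p f 0 (\<lambda>k. Y k - ?s k)"
  have D: "[0 = ?D] (mod ?N)"
    using dvd by (metis cong_0_iff cong_sym)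
  have "Omega p f 0 (\<lambda>i. b i + ?s' i) = Omega p f 0 (\<lambda>i. (b i + ?s i) + (Y i - ?s i))"
    by (rule Omega_cong) (simp add: sv')
  also have "\<dots> = Omega p f 0 (\<lambda>i. b i + ?s i) + ?D"
    by (rule Omega_add)
  finally have c1: "[c1 = Omega p f 0 (\<lambda>i. b i + ?s' i)] (mod ?N)"
    using cong_add[OF _ D, of c1 "Omega p f 0 (\<lambda>i. b i + ?s i)"] Jx by (simp add: Sset_iff)
  have "Omega p f 0 (\<lambda>i. a i + int e - ?s' i)
      = Omega p f 0 (\<lambda>i. (a i + int e - ?s i) - (Y i - ?s i))"
    by (rule Omega_cong) (simp add: sv')
  also have "\<dots> = Omega p f 0 (\<lambda>i. a i + int e - ?s i) - ?D"
    by (rule Omega_diff)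
  finally have c2: "[c2 = Omega p f 0 (\<lambda>i. a i + int e - ?s' i)] (mod ?N)"
    using cong_diff[OF _ D, of c2 "Omega p f 0 (\<lambda>i. a i + int e - ?s i)"] Jx by (simp add: Sset_iff)
  have "x' i \<le> e - 1" if "i < f" for i
    using Y[OF that] by (auto simp: x'_def J'_def admissible_def)
  moreover have "J' \<subseteq> {..<f}" "\<forall>i\<ge>f. x' i = 0"
    by (auto simp: J'_def x'_def)
  ultimately show "(J', x') \<in> Sset p f e a b c1 c2"
    using c1 c2 unfolding Sset_iff by blast
qed

lemma maximal_Sset_Omega_nonpos:
  assumes "0 < p" and Jx: "(J, x) \<in> Sset p f e a b c1 c2"
    and max: "\<forall>y \<in> Sset p f e a b c1 c2. prec p f a b y (J, x)"
    and Y: "\<And>k. k < f \<Longrightarrow> admissible e (rr a b k) (Y k)"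
    and dvd: "int p ^ f - 1 dvd Omega p f 0 (\<lambda>k. Y k - sv a b (J, x) k)"
    and "i < f"
  shows "Omega p f i (\<lambda>k. Y k - sv a b (J, x) k) \<le> 0"
proof -
  obtain J' x' where Jx': "(J', x') \<in> Sset p f e a b c1 c2"
    and sv': "\<And>k. k < f \<Longrightarrow> sv a b (J', x') k = Y k"
    using obtain_Sset_with_sv[OF Jx Y dvd] by blast
  obtain m :: nat
    where m: "Omega p f i (\<lambda>k. sv a b (J, x) k - sv a b (J', x') k) = (int p ^ f - 1) * int m"
    using max Jx' \<open>i < f\<close> unfolding prec_def by blast
  have "Omega p f i (\<lambda>k. sv a b (J, x) k - sv a b (J', x') k) = - Omega p f i (\<lambda>k. Y k - sv a b (J, x) k)"
    by (subst Omega_cong[where h = "\<lambda>k. sv a b (J, x) k - Y k"]) (simp_all add: sv' Omega_diff)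
  moreover have "0 \<le> int p ^ f - 1" using \<open>0 < p\<close> by simp
  ultimately show ?thesis using m by (metis neg_0_le_iff_le of_nat_0_le_iff mult_nonneg_nonneg)
qed

lemma xiv_minus_tv:
  assumes "\<kappa> < f"
  shows "xiv p f e a b Jx \<kappa> - tv e a b Jx \<kappa> * (int p ^ f - 1)
    = int p * Omega p f (Suc \<kappa>) (\<lambda>j. sv a b Jx j - tv e a b Jx j)"
  using Omega_Suc_index[of f p \<kappa> "\<lambda>j. sv a b Jx j - tv e a b Jx j"] assms
  unfolding xiv_def by (simp add: algebra_simps)

locale maximal_Sset_element =
  fixes p f e :: nat and a b :: "nat \<Rightarrow> int" and n :: "nat \<Rightarrow> nat"
    and c1 c2 :: int and J :: "nat set" and x :: "nat \<Rightarrow> nat"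
  assumes prime: "prime p" and f_pos: "0 < f" and e_pos: "1 \<le> e"
    and chi: "[c1 - c2 = Omega p f 0 (\<lambda>i. int (n i))] (mod (int p ^ f - 1))"
    and weakly_generic: "\<forall>i<f. int e \<le> int (n i) \<and> int (n i) \<le> int p - int e"
    and weight: "\<forall>i<f. 0 \<le> a i - b i \<and> a i - b i \<le> int p - 1"
    and Jx_in: "(J, x) \<in> Sset p f e a b c1 c2"
    and Jx_max: "\<forall>y \<in> Sset p f e a b c1 c2. prec p f a b y (J, x)"
begin

abbreviation "N \<equiv> int p ^ f - 1"
abbreviation "s \<equiv> sv a b (J, x)"
abbreviation "r \<equiv> rr a b"
abbreviation "t \<equiv> tv e a b (J, x)"

definition digit :: "nat \<Rightarrow> int" where
  "digit k = s k - t k - int (n k)"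

text \<open>The division is exact, see \<open>Omega_digit\<close>.\<close>

definition carry :: "nat \<Rightarrow> int" where
  "carry i = Omega p f i digit div N"

lemma p_ge_2: "2 \<le> int p"
  using prime_ge_2_nat[OF prime] by linarith

lemma N_pos: "0 < N"
proof -
  have "int p \<le> int p ^ f" using p_ge_2 f_pos power_increasing[of 1 f "int p"] by simp
  then show ?thesis using p_ge_2 by linarith
qed

lemma r_bounds: "k < f \<Longrightarrow> 1 \<le> r k \<and> r k \<le> int p"
  using weight by (auto simp: rr_def)

lemma n_bounds: "k < f \<Longrightarrow> int e \<le> int (n k) \<and> int (n k) + int e \<le> int p"
  using weakly_generic by auto

lemma s_admissible: "k < f \<Longrightarrow> admissible e (r k) (s k)"
  using sv_admissible[OF Jx_in e_pos] .

lemma t_eq: "t k = r k - 1 + int e - s k"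
  by (simp add: tv_def rr_def)

lemma digit_eq: "digit k = 2 * s k - r k - int e + 1 - int (n k)"
  by (simp add: digit_def t_eq)

lemma dvd_Omega_0_digit: "N dvd Omega p f 0 digit"
proof -
  have "Omega p f 0 (\<lambda>i. b i + s i) - Omega p f 0 (\<lambda>i. a i + int e - s i)
      = Omega p f 0 (\<lambda>i. (b i + s i) - (a i + int e - s i))"
    by (rule Omega_diff[symmetric])
  also have "\<dots> = Omega p f 0 (\<lambda>i. s i - t i)"
    by (rule arg_cong[where f = "Omega p f 0"]) (simp add: fun_eq_iff t_eq rr_def)
  finally have eq: "Omega p f 0 (\<lambda>i. b i + s i) - Omega p f 0 (\<lambda>i. a i + int e - s i)
      = Omega p f 0 (\<lambda>i. s i - t i)" .
  have "[c1 - c2 = Omega p f 0 (\<lambda>i. b i + s i) - Omega p f 0 (\<lambda>i. a i + int e - s i)] (mod N)"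
    using Jx_in by (intro cong_diff) (simp_all add: Sset_iff)
  then have "[Omega p f 0 (\<lambda>i. s i - t i) = Omega p f 0 (\<lambda>i. int (n i))] (mod N)"
    using chi unfolding eq by (rule cong_trans[OF cong_sym])
  moreover have "digit = (\<lambda>k. (s k - t k) - int (n k))"
    by (simp add: fun_eq_iff digit_def)
  ultimately show ?thesis
    by (simp only: Omega_diff cong_iff_dvd_diff)
qed

lemma Omega_digit: "Omega p f i digit = N * carry i"
  using dvd_Omega_index[OF f_pos dvd_Omega_0_digit] by (simp add: carry_def)

lemma carry_mod: "carry (i mod f) = carry i"
  by (simp add: carry_def Omega_mod_index)

lemma digit_carry: "digit (i mod f) = int p * carry (Suc i) - carry i"
proof -
  have "N * (carry i + digit (i mod f)) = N * (int p * carry (Suc i))"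
    using Omega_Suc_index[OF f_pos, of p i digit] unfolding Omega_digit
    by (metis distrib_left mult.left_commute)
  then have "carry i + digit (i mod f) = int p * carry (Suc i)"
    using N_pos by simp
  then show ?thesis by simp
qed

lemma digit_bounds: "k < f \<Longrightarrow> 1 - 2 * int p \<le> digit k \<and> digit k \<le> int p - 1"
  using s_admissible[of k] r_bounds[of k] n_bounds[of k]
  by (auto simp: digit_eq admissible_def)

lemma carry_le_1: "carry i \<le> 1"
  and digit_eq_if_carry_eq_1: "carry i = 1 \<Longrightarrow> k < f \<Longrightarrow> digit k = int p - 1"
proof -
  have O: "Omega p f i (\<lambda>k. int p - 1 - digit k) = N * (1 - carry i)"
    using Omega_diff[of p f i "\<lambda>_. int p - 1" digit]
    by (simp only: Omega_digit Omega_const_p_minus_1 right_diff_distrib mult_1_right)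
  have le: "int p - 1 - digit k \<le> N * (1 - carry i)" if "k < f" for k
    unfolding O[symmetric] using p_ge_2 digit_bounds that by (intro Omega_term_le) auto
  have "0 \<le> N * (1 - carry i)"
    using le[OF f_pos] digit_bounds[OF f_pos] by linarith
  then show "carry i \<le> 1"
    using N_pos zero_le_mult_iff[of N "1 - carry i"] by linarith
  show "digit k = int p - 1" if "carry i = 1" "k < f"
    using le[OF that(2)] digit_bounds[OF that(2)] that(1) by simp
qed

lemma carry_ge_minus_2:
  assumes "\<kappa> < f" "r \<kappa> \<le> s \<kappa>"
  shows "-2 \<le> carry i"
proof -
  have O: "Omega p f i (\<lambda>k. digit k + 3 * (int p - 1)) = N * (carry i + 3)"
    using Omega_add[of p f i digit "\<lambda>_. 3 * (int p - 1)"] Omega_scale[of p f i 3 "\<lambda>_. int p - 1"]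
    by (simp only: Omega_digit Omega_const_p_minus_1 distrib_left mult.commute)
  have "digit \<kappa> + 3 * (int p - 1) \<le> N * (carry i + 3)"
    unfolding O[symmetric]
  proof (rule Omega_term_le)
    show "0 \<le> digit k + 3 * (int p - 1)" if "k < f" for k
      using digit_bounds[OF that] p_ge_2 by (simp add: algebra_simps)
  qed (use p_ge_2 assms(1) in auto)
  moreover have "2 - int p \<le> digit \<kappa>"
    using assms r_bounds[of \<kappa>] n_bounds[of \<kappa>] by (simp add: digit_eq)
  then have "0 < digit \<kappa> + 3 * (int p - 1)" using p_ge_2 by (simp add: algebra_simps)
  ultimately have "0 < N * (carry i + 3)" by (rule less_le_trans[rotated])
  then show ?thesis using N_pos by (simp add: zero_less_mult_iff)
qed

lemma carry_Suc_eq_minus_2D: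
  assumes "carry (Suc j) = -2" "-2 \<le> carry j"
  shows "s (j mod f) = 0 \<and> (r (j mod f) = int p \<or> r (j mod f) = int p - 1 \<and> carry j = -2)"
proof -
  let ?j = "j mod f"
  have j: "?j < f" using f_pos by simp
  have digit_j: "digit ?j = -2 * int p - carry j"
    using digit_carry[of j] assms(1) by simp
  have "2 * s ?j \<le> 1"
    using digit_j digit_eq[of ?j] assms(2) n_bounds[OF j] r_bounds[OF j] by linarith
  then have s0: "s ?j = 0"
    using s_admissible[OF j] r_bounds[OF j] by (auto simp: admissible_def)
  then show ?thesis
    using digit_j digit_eq[of ?j] assms(2) n_bounds[OF j] r_bounds[OF j] carry_le_1[of j] by auto
qed

text \<open>A negative carry at \<open>Suc \<kappa>\<close> propagates backwards: the carries stay -2 and s vanishes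
  on the indices 1, ..., L steps before \<kappa>, where L is the first such step with r = p.\<close>

lemma obtain_carry_block:
  assumes \<kappa>: "\<kappa> < f" and s_\<kappa>: "r \<kappa> \<le> s \<kappa>" and neg: "carry (Suc \<kappa>) < 0"
  obtains L where "0 < L" "L < f" "s \<kappa> = 1" "r (cyc_diff f \<kappa> L) = int p"
    "\<And>l. 0 < l \<Longrightarrow> l \<le> L \<Longrightarrow> s (cyc_diff f \<kappa> l) = 0"
    "\<And>l. 0 < l \<Longrightarrow> l < L \<Longrightarrow> r (cyc_diff f \<kappa> l) = int p - 1"
proof -
  let ?pos = "cyc_diff f \<kappa>"
  have lower: "-2 \<le> carry i" for i
    using carry_ge_minus_2[OF \<kappa> s_\<kappa>] .
  have "int p * carry (Suc \<kappa>) \<le> int p * (-1)"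
    using neg p_ge_2 by (intro mult_left_mono) auto
  then have s_\<kappa>_1: "s \<kappa> = 1" and carry_\<kappa>: "carry \<kappa> = -2"
    using digit_carry[of \<kappa>] digit_eq[of \<kappa>] \<kappa> s_\<kappa> lower[of \<kappa>] r_bounds[OF \<kappa>] n_bounds[OF \<kappa>]
    by simp_all
  have pos_less: "?pos l < f" for l
    using cyc_diff_less[OF f_pos] .
  have step: "s (?pos (Suc l)) = 0 \<and>
      (r (?pos (Suc l)) = int p \<or> r (?pos (Suc l)) = int p - 1 \<and> carry (?pos (Suc l)) = -2)"
    if "carry (?pos l) = -2" for l
  proof -
    have "carry (Suc (?pos (Suc l))) = carry (?pos l)"
      using carry_mod[of "Suc (?pos (Suc l))"] Suc_cyc_diff_Suc_mod[OF f_pos] by simp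
    then show ?thesis
      using carry_Suc_eq_minus_2D[of "?pos (Suc l)"] that lower pos_less by simp
  qed
  have walk: "carry (?pos l) = -2" if "\<And>l'. 0 < l' \<Longrightarrow> l' \<le> l \<Longrightarrow> r (?pos l') \<noteq> int p" for l
    using that
  proof (induction l)
    case 0
    show ?case using carry_\<kappa> \<kappa> by (simp add: cyc_diff_def)
  next
    case (Suc l)
    then show ?case using step[of l] by force
  qed
  have "?pos (f - 1) = Suc \<kappa> mod f"
    using Suc_cyc_diff_Suc_mod[OF f_pos, of \<kappa> "f - 1"] cyc_diff_mod_right[of f \<kappa> f] \<kappa> f_pos
    by (simp add: cyc_diff_def)
  then have "carry (?pos (f - 1)) \<noteq> -2"
    using carry_Suc_eq_minus_2D[of \<kappa>] carry_mod[of "Suc \<kappa>"] lower s_\<kappa>_1 \<kappa> by auto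
  then have "\<exists>L. 0 < L \<and> L < f \<and> r (?pos L) = int p"
    using walk[of "f - 1"] by (metis diff_less f_pos le_less_trans zero_less_one)
  then obtain L where L: "0 < L" "L < f" "r (?pos L) = int p"
    and least: "\<And>l. l < L \<Longrightarrow> \<not> (0 < l \<and> l < f \<and> r (?pos l) = int p)"
    unfolding exists_least_iff[of "\<lambda>L. 0 < L \<and> L < f \<and> r (?pos L) = int p"] by blast
  have block: "carry (?pos l) = -2" if "l < L" for l
    using walk least that L(2) by (meson le_less_trans order.strict_trans)
  show thesis
  proof (rule that[OF L(1,2) s_\<kappa>_1 L(3)])
    show "s (?pos l) = 0" if "0 < l" "l \<le> L" for l
      using that step[of "l - 1"] block[of "l - 1"] by simp
    show "r (?pos l) = int p - 1" if "0 < l" "l < L" for l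
      using that step[of "l - 1"] block[of "l - 1"] least[of l] L(2) by simp
  qed
qed

text \<open>If the carry were negative, moving one unit of s from \<kappa> through the block of
  \<open>obtain_carry_block\<close> would give an admissible Y with \<open>Omega p f \<kappa> (Y - s) = N > 0\<close>,
  contradicting maximality.\<close>

lemma carry_Suc_nonneg:
  assumes \<kappa>: "\<kappa> < f" and t_lt_r: "t \<kappa> < r \<kappa>"
  shows "0 \<le> carry (Suc \<kappa>)"
proof (rule ccontr)
  assume "\<not> 0 \<le> carry (Suc \<kappa>)"
  then have neg: "carry (Suc \<kappa>) < 0" by simp
  have s_\<kappa>: "r \<kappa> \<le> s \<kappa>"
    using t_lt_r s_admissible[OF \<kappa>] by (auto simp: t_eq admissible_def)
  obtain L where L: "0 < L" "L < f" "s \<kappa> = 1" "r (cyc_diff f \<kappa> L) = int p"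
    and L_s: "\<And>l. 0 < l \<Longrightarrow> l \<le> L \<Longrightarrow> s (cyc_diff f \<kappa> l) = 0"
    and L_r: "\<And>l. 0 < l \<Longrightarrow> l < L \<Longrightarrow> r (cyc_diff f \<kappa> l) = int p - 1"
    using obtain_carry_block[OF \<kappa> s_\<kappa> neg] by blast
  define C where "C k = (if cyc_diff f \<kappa> k < L then 1 else 0 :: int)" for k
  define Y where "Y k = s k + int p * C (Suc k) - C k" for k
  have Omega_Y: "Omega p f i (\<lambda>k. Y k - s k) = N * C i" for i
    using Omega_telescope[of C f p i] by (simp add: Y_def C_def cyc_diff_mod_right)
  have Y_admissible: "admissible e (r k) (Y k)" if k: "k < f" for k
  proof -
    let ?l = "cyc_diff f \<kappa> k"
    have k_pos: "cyc_diff f \<kappa> ?l = k"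
      using cyc_diff_cyc_diff[OF f_pos] k by simp
    have C_Suc: "C (Suc k) = (if 0 < ?l \<and> ?l \<le> L then 1 else 0)"
      using cyc_diff_Suc[OF f_pos, of \<kappa> k] L(2) by (auto simp: C_def)
    consider "?l = 0" | "0 < ?l" "?l < L" | "?l = L" | "L < ?l"
      by linarith
    then show ?thesis
    proof cases
      case 1
      then have "k = \<kappa>" using cyc_diff_eq_0_iff[OF f_pos] k \<kappa> by simp
      then show ?thesis using 1 L(1,3) C_Suc e_pos by (simp add: Y_def C_def admissible_def)
    next
      case 2
      then show ?thesis using L_s[of ?l] L_r[of ?l] k_pos C_Suc e_pos by (simp add: Y_def C_def admissible_def)
    next
      case 3
      then show ?thesis using L_s[of ?l] L(1,4) k_pos C_Suc e_pos by (simp add: Y_def C_def admissible_def)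
    next
      case 4
      then show ?thesis using s_admissible[OF k] C_Suc by (simp add: Y_def C_def)
    qed
  qed
  have "Omega p f \<kappa> (\<lambda>k. Y k - s k) \<le> 0"
    using maximal_Sset_Omega_nonpos[OF _ Jx_in Jx_max Y_admissible _ \<kappa>] Omega_Y[of 0] p_ge_2
    by simp
  moreover have "C \<kappa> = 1"
    using L(1) \<kappa> by (simp add: C_def cyc_diff_def)
  ultimately show False
    using Omega_Y[of \<kappa>] N_pos by simp
qed

lemma dvd_s_minus_t_iff:
  assumes \<kappa>: "\<kappa> < f" and t_lt_r: "t \<kappa> < r \<kappa>"
  shows "int p dvd s (Suc \<kappa> mod f) - t (Suc \<kappa> mod f)
    \<longleftrightarrow> e = 1 \<and> (\<forall>i<f. r i = int p \<and> n i = 1 \<and> t i = 0)"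
proof
  let ?k = "Suc \<kappa> mod f"
  have k: "?k < f" using f_pos by simp
  assume dvd: "int p dvd s ?k - t ?k"
  have "s ?k - t ?k = int p * carry (Suc (Suc \<kappa>)) + (int (n ?k) - carry (Suc \<kappa>))"
    using digit_carry[of "Suc \<kappa>"] by (simp add: digit_def)
  then have dvd_n: "int p dvd int (n ?k) - carry (Suc \<kappa>)"
    using dvd by (simp add: dvd_add_right_iff)
  have n_k: "1 \<le> int (n ?k)" "int (n ?k) < int p"
    using n_bounds[OF k] e_pos by linarith+
  have "carry (Suc \<kappa>) = 1"
  proof (rule ccontr)
    assume "carry (Suc \<kappa>) \<noteq> 1"
    then have "carry (Suc \<kappa>) = 0"
      using carry_Suc_nonneg[OF \<kappa> t_lt_r] carry_le_1[of "Suc \<kappa>"] by linarith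
    then have "int p \<le> int (n ?k)"
      using dvd_n n_k by (intro zdvd_imp_le) auto
    then show False using n_k by linarith
  qed
  then have digit_top: "\<And>i. i < f \<Longrightarrow> digit i = int p - 1"
    using digit_eq_if_carry_eq_1 by blast
  have "int (n ?k) = 1"
  proof (rule ccontr)
    assume "int (n ?k) \<noteq> 1"
    then have "int p \<le> int (n ?k) - 1"
      using dvd_n n_k \<open>carry (Suc \<kappa>) = 1\<close> by (intro zdvd_imp_le) auto
    then show False using n_k by linarith
  qed
  then have e1: "e = 1"
    using n_bounds[OF k] e_pos by linarith
  have "r i = int p \<and> n i = 1 \<and> t i = 0" if i: "i < f" for i
    using digit_top[OF i] digit_eq[of i] t_eq[of i] s_admissible[OF i] r_bounds[OF i] n_bounds[OF i] e1
    by (auto simp: admissible_def)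
  then show "e = 1 \<and> (\<forall>i<f. r i = int p \<and> n i = 1 \<and> t i = 0)"
    using e1 by blast
next
  assume "e = 1 \<and> (\<forall>i<f. r i = int p \<and> n i = 1 \<and> t i = 0)"
  moreover have "Suc \<kappa> mod f < f" using f_pos by simp
  ultimately show "int p dvd s (Suc \<kappa> mod f) - t (Suc \<kappa> mod f)"
    using t_eq[of "Suc \<kappa> mod f"] by auto
qed

end

theorem proposition5p12:
  fixes p f e :: nat and a b :: "nat \<Rightarrow> int" and n :: "nat \<Rightarrow> nat"
    and c1 c2 :: int and J :: "nat set" and x :: "nat \<Rightarrow> nat" and \<kappa> :: nat
  assumes "prime p" and "f \<ge> 1" and "e \<ge> 1"
    and n_range: "\<forall>i<f. 1 \<le> n i \<and> n i \<le> p" and n_some: "\<exists>i<f. n i < p"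
    and chi: "[c1 - c2 = Omega p f 0 (\<lambda>i. int (n i))] (mod (int p ^ f - 1))"
    and weakly_generic: "\<forall>i<f. int e \<le> int (n i) \<and> int (n i) \<le> int p - int e"
    and weight: "\<forall>i<f. 0 \<le> a i - b i \<and> a i - b i \<le> int p - 1"
    and Jx_in: "(J, x) \<in> Sset p f e a b c1 c2"
    and Jx_max: "\<forall>y \<in> Sset p f e a b c1 c2. prec p f a b y (J, x)"
    and "\<kappa> < f"
    and t_lt_r: "tv e a b (J, x) \<kappa> < rr a b \<kappa>"
  shows "vp p (xiv p f e a b (J, x) \<kappa> - tv e a b (J, x) \<kappa> * (int p ^ f - 1)) > 1
     \<longleftrightarrow> (e = 1 \<and> (\<forall>i<f. rr a b i = int p \<and> n i = 1 \<and> tv e a b (J, x) i = 0))"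
proof -
  interpret maximal_Sset_element p f e a b n c1 c2 J x
    using assms by unfold_locales auto
  have "vp p (xiv p f e a b (J, x) \<kappa> - t \<kappa> * N) > 1 \<longleftrightarrow> int p dvd Omega p f (Suc \<kappa>) (\<lambda>j. s j - t j)"
    using xiv_minus_tv[OF \<open>\<kappa> < f\<close>] vp_mult_gt_1_iff[OF prime] by simp
  also have "\<dots> \<longleftrightarrow> int p dvd s (Suc \<kappa> mod f) - t (Suc \<kappa> mod f)"
    using Omega_cong_mod_p[OF f_pos] by (rule cong_dvd_iff)
  also have "\<dots> \<longleftrightarrow> e = 1 \<and> (\<forall>i<f. r i = int p \<and> n i = 1 \<and> t i = 0)"
    using \<open>\<kappa> < f\<close> t_lt_r by (rule dvd_s_minus_t_iff)
  finally show ?thesis .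
qed

end
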